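(* Fix $C\neq1$ and fix $\epsilon\in(0,1)$ and $\omega>0$ such that $\delta_0=\delta(C)-C\epsilon-\omega>0$ (note $\delta_2=\delta(C)-\log(1-\epsilon)+\omega>0$ automatically). There is a positive constant $N$ such that for all $n\ge N$, all $1\le i\le n$ and all integers $1\le r\le\epsilon n$, \[ \mathbb{P}(\#\mathcal{E}_i=r)\le\frac{T_re^{-r}}{C(r-1)!}e^{-\delta_0 r} \] and \[ \mathbb{P}(\#\mathcal{E}_i=r)\ge\frac{1}{C(1-\epsilon)}\frac{T_re^{-r}}{(r-1)!}e^{-\delta_2 r}e^{-2\epsilon+\frac{2\omega}{3}}. \]
   Context: Let $C>0$ be a constant and $(\alpha_n)_{n\ge1}$ a sequence of nonnegative reals with $\alpha_n\to0$. For each $n$, consider the complete graph $K_n$ on vertex set $\{1,\dots,n\}$; each edge $e$ of $K_n$ is independently open with probability $p_n(e)$ and closed otherwise, where $\frac{C-\alpha_n}{n}\le p_n(e)\le\frac{C+\alpha_n}{n}$ for every edge $e$. Let $G$ be the resulting random graph of open edges, with probability measure $\mathbb{P}$. For a vertex $i$, $\mathcal{E}_i$ denotes the open component of $G$ containing $i$ (the set of vertices joined to $i$ by a path of open edges, together with $i$ itself), and $\#\mathcal{E}_i$ its number of vertices. $\delta(C)=C-1-\log C$. $T_1=1$ and for $r\ge2$, $T_r$ is the number of labelled trees on $r$ vertices. *)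

theory Defs
  imports "HOL-Analysis.Analysis"
begin

definition complete_edges :: "nat set \<Rightarrow> nat set set" where
  "complete_edges V = {{u, v} | u v. u \<in> V \<and> v \<in> V \<and> u \<noteq> v}"

definition Kn_edges :: "nat \<Rightarrow> nat set set" where
  "Kn_edges n = complete_edges {1..n}"

definition adj :: "nat set set \<Rightarrow> (nat \<times> nat) set" where
  "adj G = {(u, v). {u, v} \<in> G}"

definition component :: "nat set set \<Rightarrow> nat \<Rightarrow> nat set" where
  "component G i = {j. (i, j) \<in> (adj G)\<^sup>*}"

text \<open>Probability of an event A (a predicate on open edge sets) in the random graph
  on K_n whose edges are independently open with probabilities p n e.\<close>
definition rg_prob :: "(nat \<Rightarrow> nat set \<Rightarrow> real) \<Rightarrow> nat \<Rightarrow> (nat set set \<Rightarrow> bool) \<Rightarrow> real" where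
  "rg_prob p n A = (\<Sum>G\<in>{G. G \<subseteq> Kn_edges n \<and> A G}.
      (\<Prod>e\<in>G. p n e) * (\<Prod>e\<in>Kn_edges n - G. 1 - p n e))"

definition connected_on :: "nat set \<Rightarrow> nat set set \<Rightarrow> bool" where
  "connected_on V F \<longleftrightarrow> (\<forall>u\<in>V. \<forall>v\<in>V. (u, v) \<in> (adj F)\<^sup>*)"

definition acyclic_graph :: "nat set set \<Rightarrow> bool" where
  "acyclic_graph F \<longleftrightarrow> \<not> (\<exists>u v. {u, v} \<in> F \<and> u \<noteq> v \<and> (u, v) \<in> (adj (F - {{u, v}}))\<^sup>*)"

definition is_tree_on :: "nat set \<Rightarrow> nat set set \<Rightarrow> bool" where
  "is_tree_on V F \<longleftrightarrow> F \<subseteq> complete_edges V \<and> connected_on V F \<and> acyclic_graph F"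

definition T :: "nat \<Rightarrow> nat" where
  "T r = card {F. is_tree_on {1..r} F}"

definition delta :: "real \<Rightarrow> real" where
  "delta C = C - 1 - ln C"

end

theory Submission
  imports Defs
begin

text \<open>
  The component of \<open>i\<close> has \<open>r\<close> vertices iff it is some \<open>r\<close>-set \<open>S \<ni> i\<close>;
  then the open edges inside \<open>S\<close> contain a spanning tree \<open>F\<close> of \<open>S\<close> and no edge leaving \<open>S\<close>
  is open. A union bound over the \<open>(n - 1 choose r - 1) * T r\<close> pairs \<open>(S, F)\<close> gives the upper
  bound, each pair contributing at most \<open>p ^ (r - 1) * (1 - p) ^ (r * (n - r))\<close>. Conversely, the
  events that the open edges meeting \<open>S\<close> are exactly those of \<open>F\<close> are pairwise disjoint, and each
  makes \<open>S\<close> the component of \<open>i\<close>; this gives the lower bound with \<open>(1 - p) ^ (r * n)\<close> in place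
  of \<open>(1 - p) ^ (r * (n - r))\<close>. For \<open>p = (C \<plusminus> \<alpha> n) / n\<close> the estimates
  \<open>((1 - \<epsilon>) * n) ^ (r - 1) \<le> (n - 1 choose r - 1) * (r - 1)! \<le> n ^ (r - 1)\<close> and
  \<open>exp (- x * m - 2 * x\<^sup>2 * m) \<le> (1 - x) ^ m \<le> exp (- x * m)\<close> turn these into the stated
  bounds; the errors caused by \<open>\<alpha> n\<close> and \<open>1 / n\<close> are absorbed into \<open>\<omega>\<close> once \<open>n\<close> is large.
\<close>

section \<open>Graphs given by edge sets\<close>

lemma sym_adj: "sym (adj G)"
  by (auto simp: sym_def adj_def insert_commute)

lemma adj_rtrancl_sym: "(u, v) \<in> (adj G)\<^sup>* \<Longrightarrow> (v, u) \<in> (adj G)\<^sup>*"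
  using sym_rtrancl[OF sym_adj] by (auto simp: sym_def)

lemma adj_rtrancl_mono: "F \<subseteq> G \<Longrightarrow> (adj F)\<^sup>* \<subseteq> (adj G)\<^sup>*"
  by (intro rtrancl_mono) (auto simp: adj_def)

lemma adj_insert: "adj (insert {u, v} F) = insert (u, v) (insert (v, u) (adj F))"
  by (auto simp: adj_def insert_commute doubleton_eq_iff)

lemma complete_edgesE:
  assumes "e \<in> complete_edges V"
  obtains u v where "e = {u, v}" "u \<in> V" "v \<in> V" "u \<noteq> v"
  using assms by (auto simp: complete_edges_def)

lemma doubleton_in_complete_edges_iff:
  "{u, v} \<in> complete_edges V \<longleftrightarrow> u \<in> V \<and> v \<in> V \<and> u \<noteq> v"
  unfolding complete_edges_def by (auto simp: doubleton_eq_iff)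

lemma complete_edges_mono: "S \<subseteq> V \<Longrightarrow> complete_edges S \<subseteq> complete_edges V"
  unfolding complete_edges_def by blast

lemma finite_complete_edges: "finite V \<Longrightarrow> finite (complete_edges V)"
  by (rule finite_subset[of _ "Pow V"]) (auto simp: complete_edges_def)

lemma adj_subset_complete_edges: "F \<subseteq> complete_edges V \<Longrightarrow> adj F \<subseteq> V \<times> V"
  by (auto simp: adj_def doubleton_in_complete_edges_iff dest!: subsetD)

lemma finite_Kn_edges: "finite (Kn_edges n)"
  unfolding Kn_edges_def by (simp add: finite_complete_edges)

lemma finite_trees: "finite V \<Longrightarrow> finite {F. is_tree_on V F}"
  by (rule finite_subset[of _ "Pow (complete_edges V)"])
     (auto simp: is_tree_on_def finite_complete_edges)

section \<open>Components\<close>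

lemma mem_component_iff [simp]: "w \<in> component F v \<longleftrightarrow> (v, w) \<in> (adj F)\<^sup>*"
  by (simp add: component_def)

lemma component_self: "v \<in> component F v"
  by simp

lemma component_eqI:
  assumes "(v, w) \<in> (adj F)\<^sup>*"
  shows "component F v = component F w"
  using rtrancl_trans[OF assms] rtrancl_trans[OF adj_rtrancl_sym[OF assms]]
  unfolding component_def by auto

lemma component_eq_of_mem: "w \<in> component F v \<Longrightarrow> component F w = component F v"
  using component_eqI[of v w F] by simp

lemma component_empty: "component {} v = {v}"
  by (simp add: component_def adj_def)

lemma rtrancl_adj_insert_iff:
  "(x, y) \<in> (adj (insert {u, v} F))\<^sup>* \<longleftrightarrow>
    (x, y) \<in> (adj F)\<^sup>* \<or> (x \<in> component F u \<union> component F v \<and> y \<in> component F u \<union> component F v)"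
  (is "?L \<longleftrightarrow> ?R")
proof
  let ?B = "component F u \<union> component F v"
  assume ?L
  then show ?R
  proof (induction y rule: rtrancl_induct)
    case base
    then show ?case by simp
  next
    case (step y z)
    then have yz: "(y, z) \<in> adj F \<or> (y, z) = (u, v) \<or> (y, z) = (v, u)"
      by (auto simp: adj_insert)
    from step.IH show ?case
    proof
      assume xy: "(x, y) \<in> (adj F)\<^sup>*"
      have "x \<in> component F y"
        using adj_rtrancl_sym[OF xy] by simp
      with yz show ?case
        using rtrancl.rtrancl_into_rtrancl[OF xy] by auto
    next
      assume xy: "x \<in> ?B \<and> y \<in> ?B"
      have "z \<in> ?B" if "(y, z) \<in> adj F"
        using xy that by (auto intro: rtrancl.rtrancl_into_rtrancl)
      with xy yz show ?case by auto
    qed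
  qed
next
  let ?A = "adj (insert {u, v} F)"
  have sub: "(adj F)\<^sup>* \<subseteq> ?A\<^sup>*"
    by (rule adj_rtrancl_mono) auto
  have vu: "(v, u) \<in> ?A\<^sup>*"
    by (auto simp: adj_insert)
  have to_u: "(a, u) \<in> ?A\<^sup>*" if "a \<in> component F u \<union> component F v" for a
  proof -
    have "(a, u) \<in> (adj F)\<^sup>* \<or> (a, v) \<in> (adj F)\<^sup>*"
      using that adj_rtrancl_sym by auto
    then show ?thesis
      using sub rtrancl_trans[OF _ vu] by blast
  qed
  assume ?R
  then show ?L
  proof
    assume "x \<in> component F u \<union> component F v \<and> y \<in> component F u \<union> component F v"
    then show ?L
      using to_u adj_rtrancl_sym[OF to_u] rtrancl_trans by meson
  qed (use sub in blast)
qed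

lemma component_insert:
  "component (insert {u, v} F) w =
    (if w \<in> component F u \<union> component F v then component F u \<union> component F v else component F w)"
  (is "_ = (if w \<in> ?B then ?B else _)")
proof (cases "w \<in> ?B")
  case True
  have "x \<in> ?B" if "(w, x) \<in> (adj F)\<^sup>*" for x
    using True that component_eq_of_mem[of w F u] component_eq_of_mem[of w F v]
    by (metis Un_iff mem_component_iff)
  then have "x \<in> component (insert {u, v} F) w \<longleftrightarrow> x \<in> ?B" for x
    using True unfolding component_def[of "insert {u, v} F"] rtrancl_adj_insert_iff
    by (simp only: mem_Collect_eq) blast
  then show ?thesis
    unfolding if_P[OF True] by blast
next
  case False
  then show ?thesis
    unfolding component_def[of "insert {u, v} F"] rtrancl_adj_insert_iff by (auto simp: component_def)
qed

section \<open>Trees\<close>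

definition num_components :: "nat set \<Rightarrow> nat set set \<Rightarrow> nat" where
  "num_components V F = card (component F ` V)"

lemma num_components_empty: "num_components V {} = card V"
  unfolding num_components_def component_empty
  by (simp add: card_image inj_on_def)

lemma components_insert_edge:
  assumes "u \<in> V" "v \<in> V"
  shows "component (insert {u, v} F) ` V =
    insert (component F u \<union> component F v) (component F ` V - {component F u, component F v})"
    (is "_ = insert ?B (?K ` V - _)")
proof
  show "component (insert {u, v} F) ` V \<subseteq> insert ?B (?K ` V - {?K u, ?K v})"
  proof
    fix X assume "X \<in> component (insert {u, v} F) ` V"
    then obtain w where w: "w \<in> V" "X = component (insert {u, v} F) w" by auto
    show "X \<in> insert ?B (?K ` V - {?K u, ?K v})"
    proof (cases "w \<in> ?B")
      case True
      then show ?thesis using w component_insert by simp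
    next
      case False
      then have "?K w \<noteq> ?K u" "?K w \<noteq> ?K v" using component_self[of w F] by auto
      then show ?thesis using w component_insert False by simp
    qed
  qed
  show "insert ?B (?K ` V - {?K u, ?K v}) \<subseteq> component (insert {u, v} F) ` V"
  proof
    fix X assume X: "X \<in> insert ?B (?K ` V - {?K u, ?K v})"
    show "X \<in> component (insert {u, v} F) ` V"
    proof (cases "X = ?B")
      case True
      then have "X = component (insert {u, v} F) u" using component_insert component_self by simp
      then show ?thesis using assms by blast
    next
      case False
      then obtain w where w: "w \<in> V" "X = ?K w" "?K w \<noteq> ?K u" "?K w \<noteq> ?K v" using X by auto
      then have "w \<notin> ?B" using component_eq_of_mem[of w F u] component_eq_of_mem[of w F v] by auto
      then have "X = component (insert {u, v} F) w" using w component_insert by simp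
      then show ?thesis using w by blast
    qed
  qed
qed

lemma num_components_insert_edge:
  assumes fin: "finite V" and u: "u \<in> V" and v: "v \<in> V" and not_conn: "(u, v) \<notin> (adj F)\<^sup>*"
  shows "num_components V (insert {u, v} F) + 1 = num_components V F"
proof -
  let ?K = "component F"
  let ?B = "?K u \<union> ?K v"
  have ne: "?K u \<noteq> ?K v"
    using not_conn component_self[of v F] by auto
  have "?B \<notin> ?K ` V - {?K u, ?K v}"
  proof
    assume "?B \<in> ?K ` V - {?K u, ?K v}"
    then obtain w where w: "?B = ?K w" "?K w \<noteq> ?K u" by auto
    then have "u \<in> ?K w"
      using component_self[of u F] by blast
    then show False
      using component_eq_of_mem[of u F w] w(2) by simp
  qed
  then have "num_components V (insert {u, v} F) = card (?K ` V - {?K u, ?K v}) + 1"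
    unfolding num_components_def components_insert_edge[OF u v] using fin by simp
  moreover have "card (?K ` V - {?K u, ?K v}) = card (?K ` V) - 2"
    using u v ne fin by (simp add: card_Diff_subset)
  moreover have "2 \<le> card (?K ` V)"
    using u v ne fin card_mono[of "?K ` V" "{?K u, ?K v}"] by simp
  ultimately show ?thesis
    unfolding num_components_def by linarith
qed

lemma acyclic_graph_subset:
  assumes "acyclic_graph G" "F \<subseteq> G"
  shows "acyclic_graph F"
proof -
  have "(adj (F - {{u, v}}))\<^sup>* \<subseteq> (adj (G - {{u, v}}))\<^sup>*" for u v
    using assms(2) by (intro adj_rtrancl_mono) auto
  then show ?thesis
    using assms unfolding acyclic_graph_def by blast
qed

lemma num_components_add_card_acyclic:
  assumes fin: "finite V" and "F \<subseteq> complete_edges V" and "acyclic_graph F"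
  shows "num_components V F + card F = card V"
proof -
  have "finite F"
    using assms(2) finite_complete_edges[OF fin] finite_subset by blast
  from this assms(2,3) show ?thesis
  proof (induction F rule: finite_induct)
    case empty
    then show ?case by (simp add: num_components_empty)
  next
    case (insert e F)
    obtain u v where e: "e = {u, v}" "u \<in> V" "v \<in> V" "u \<noteq> v"
      using insert.prems(1) by (auto elim: complete_edgesE)
    have "acyclic_graph F"
      using acyclic_graph_subset[OF insert.prems(2) subset_insertI] .
    then have IH: "num_components V F + card F = card V"
      using insert.IH insert.prems(1) by simp
    have "(u, v) \<notin> (adj (insert e F - {{u, v}}))\<^sup>*"
      using insert.prems(2) e(1,4) unfolding acyclic_graph_def by blast
    moreover have "insert e F - {{u, v}} = F"
      using insert.hyps(2) e(1) by auto
    ultimately have "(u, v) \<notin> (adj F)\<^sup>*"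
      by simp
    then have "num_components V (insert e F) + 1 = num_components V F"
      using num_components_insert_edge[OF fin e(2,3)] e by simp
    then show ?case
      using IH insert.hyps by simp
  qed
qed

lemma card_tree_edges:
  assumes fin: "finite V" and "V \<noteq> {}" and tree: "is_tree_on V F"
  shows "card F = card V - 1"
proof -
  obtain v0 where v0: "v0 \<in> V"
    using assms(2) by blast
  have "component F w = component F v0" if "w \<in> V" for w
  proof (rule component_eqI)
    show "(w, v0) \<in> (adj F)\<^sup>*"
      using tree v0 that unfolding is_tree_on_def connected_on_def by blast
  qed
  then have "component F ` V = (\<lambda>_. component F v0) ` V"
    by (rule image_cong[OF refl])
  also have "\<dots> = {component F v0}"
    using v0 by (rule image_constant)
  finally have "num_components V F = 1"
    by (simp add: num_components_def)
  moreover have "num_components V F + card F = card V"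
    using num_components_add_card_acyclic[OF fin, of F] tree unfolding is_tree_on_def by simp
  ultimately show ?thesis by simp
qed

lemma connected_on_Diff_cycle_edge:
  assumes "connected_on S F" "{u, v} \<in> F" "(u, v) \<in> (adj (F - {{u, v}}))\<^sup>*"
  shows "connected_on S (F - {{u, v}})"
proof -
  have "adj F \<subseteq> (adj (F - {{u, v}}))\<^sup>*"
  proof
    fix x assume "x \<in> adj F"
    then obtain a b where x: "x = (a, b)" "{a, b} \<in> F" by (auto simp: adj_def)
    show "x \<in> (adj (F - {{u, v}}))\<^sup>*"
    proof (cases "{a, b} = {u, v}")
      case True
      then have "(a, b) = (u, v) \<or> (a, b) = (v, u)" by (auto simp: doubleton_eq_iff)
      then show ?thesis using assms(3) adj_rtrancl_sym[OF assms(3)] x by blast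
    next
      case False
      then have "(a, b) \<in> adj (F - {{u, v}})" using x by (auto simp: adj_def)
      then show ?thesis using x by simp
    qed
  qed
  then have "(adj F)\<^sup>* \<subseteq> (adj (F - {{u, v}}))\<^sup>*"
    by (metis rtrancl_subset_rtrancl)
  then show ?thesis
    using assms(1) by (auto simp: connected_on_def)
qed

text \<open>A connected edge set of minimal cardinality has no cycle edge.\<close>

lemma exists_spanning_tree:
  assumes "finite H" "H \<subseteq> complete_edges S" "connected_on S H"
  shows "\<exists>F\<subseteq>H. is_tree_on S F"
proof -
  obtain F where F: "F \<subseteq> H \<and> connected_on S F"
    and min: "\<forall>F'. F' \<subseteq> H \<and> connected_on S F' \<longrightarrow> card F \<le> card F'"
    using ex_has_least_nat[of "\<lambda>F. F \<subseteq> H \<and> connected_on S F" H card] assms by blast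
  have "acyclic_graph F"
  proof (rule ccontr)
    assume "\<not> acyclic_graph F"
    then obtain u v where uv: "{u, v} \<in> F" "(u, v) \<in> (adj (F - {{u, v}}))\<^sup>*"
      by (auto simp: acyclic_graph_def)
    have "connected_on S (F - {{u, v}})"
      using connected_on_Diff_cycle_edge F uv by blast
    then have "card F \<le> card (F - {{u, v}})"
      using min F by blast
    moreover have "finite F"
      using F assms(1) finite_subset by blast
    then have "card (F - {{u, v}}) < card F"
      using uv(1) by (rule card_Diff1_less)
    ultimately show False by simp
  qed
  then have "is_tree_on S F"
    using F assms(2) unfolding is_tree_on_def by blast
  then show ?thesis
    using F by blast
qed

definition edge_image :: "(nat \<Rightarrow> nat) \<Rightarrow> nat set set \<Rightarrow> nat set set" where
  "edge_image f F = (\<lambda>e. f ` e) ` F"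

lemma adj_edge_image:
  assumes "F \<subseteq> complete_edges A"
  shows "adj (edge_image f F) = map_prod f f ` adj F"
proof
  show "adj (edge_image f F) \<subseteq> map_prod f f ` adj F"
  proof
    fix x assume "x \<in> adj (edge_image f F)"
    then obtain a b where ab: "x = (a, b)" "{a, b} \<in> edge_image f F"
      by (auto simp: adj_def)
    then obtain e where e: "e \<in> F" "f ` e = {a, b}"
      by (auto simp: edge_image_def)
    have "e \<in> complete_edges A"
      using e(1) assms by blast
    then obtain c d where cd: "e = {c, d}"
      by (rule complete_edgesE)
    then have "(a, b) = (f c, f d) \<or> (a, b) = (f d, f c)"
      using e by (auto simp: doubleton_eq_iff)
    moreover have "(c, d) \<in> adj F" "(d, c) \<in> adj F"
      using e cd by (auto simp: adj_def insert_commute)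
    ultimately show "x \<in> map_prod f f ` adj F"
      using ab by force
  qed
  show "map_prod f f ` adj F \<subseteq> adj (edge_image f F)"
  proof clarify
    fix a b assume "(a, b) \<in> adj F"
    then have "{a, b} \<in> F"
      by (simp add: adj_def)
    then have "f ` {a, b} \<in> edge_image f F"
      unfolding edge_image_def by (rule imageI)
    then show "(f a, f b) \<in> adj (edge_image f F)"
      by (simp add: adj_def)
  qed
qed

lemma rtrancl_map_prod_iff:
  assumes R: "R \<subseteq> A \<times> A" and inj: "inj_on f A" and x: "x \<in> A" and y: "y \<in> A"
  shows "(f x, f y) \<in> (map_prod f f ` R)\<^sup>* \<longleftrightarrow> (x, y) \<in> R\<^sup>*"
proof
  assume "(x, y) \<in> R\<^sup>*"
  then show "(f x, f y) \<in> (map_prod f f ` R)\<^sup>*"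
  proof (induction y rule: rtrancl_induct)
    case (step y z)
    then have "(f y, f z) \<in> map_prod f f ` R"
      by force
    with step.IH show ?case
      by (rule rtrancl.rtrancl_into_rtrancl)
  qed simp
next
  have "\<forall>y\<in>A. f y = b \<longrightarrow> (x, y) \<in> R\<^sup>*" if "(f x, b) \<in> (map_prod f f ` R)\<^sup>*" for b
    using that
  proof (induction b rule: rtrancl_induct)
    case base
    show ?case
      using x inj_onD[OF inj] by auto
  next
    case (step c b)
    then obtain u v where uv: "(u, v) \<in> R" "c = f u" "b = f v"
      by auto
    with R step.IH have "(x, v) \<in> R\<^sup>*"
      by (blast intro: rtrancl.rtrancl_into_rtrancl)
    then show ?case
      using uv R inj_onD[OF inj] by auto
  qed
  then show "(f x, f y) \<in> (map_prod f f ` R)\<^sup>* \<Longrightarrow> (x, y) \<in> R\<^sup>*"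
    using y by blast
qed

lemma edge_image_complete_edges:
  assumes "inj_on f A" "F \<subseteq> complete_edges A"
  shows "edge_image f F \<subseteq> complete_edges (f ` A)"
proof
  fix g assume "g \<in> edge_image f F"
  then obtain e where e: "e \<in> F" "g = f ` e"
    by (auto simp: edge_image_def)
  from e(1) assms(2) have "e \<in> complete_edges A"
    by blast
  then obtain a b where ab: "e = {a, b}" "a \<in> A" "b \<in> A" "a \<noteq> b"
    by (rule complete_edgesE)
  then have "f a \<noteq> f b"
    using inj_onD[OF assms(1)] by blast
  then show "g \<in> complete_edges (f ` A)"
    using e(2) ab by (simp add: doubleton_in_complete_edges_iff)
qed

lemma edge_image_Diff:
  assumes "inj_on f A" "F \<subseteq> complete_edges A" "e \<subseteq> A"
  shows "edge_image f F - {f ` e} = edge_image f (F - {e})"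
proof -
  have "h \<subseteq> A" if "h \<in> F" for h
    using that assms(2) by (auto simp: complete_edges_def)
  then have "f ` h = f ` e \<longleftrightarrow> h = e" if "h \<in> F" for h
    using inj_on_image_eq_iff[OF assms(1) _ assms(3)] that by simp
  then show ?thesis
    unfolding edge_image_def by auto
qed

lemma rtrancl_adj_edge_image_iff:
  assumes "inj_on f A" "F \<subseteq> complete_edges A" "a \<in> A" "b \<in> A"
  shows "(f a, f b) \<in> (adj (edge_image f F))\<^sup>* \<longleftrightarrow> (a, b) \<in> (adj F)\<^sup>*"
  using rtrancl_map_prod_iff[OF adj_subset_complete_edges[OF assms(2)] assms(1,3,4)]
  by (simp add: adj_edge_image[OF assms(2)])

lemma connected_on_edge_image:
  assumes "inj_on f A" "F \<subseteq> complete_edges A" "connected_on A F"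
  shows "connected_on (f ` A) (edge_image f F)"
  using assms rtrancl_adj_edge_image_iff[OF assms(1,2)] unfolding connected_on_def by auto

lemma acyclic_graph_edge_image:
  assumes inj: "inj_on f A" and sub: "F \<subseteq> complete_edges A" and acyclic: "acyclic_graph F"
  shows "acyclic_graph (edge_image f F)"
  unfolding acyclic_graph_def
proof clarify
  fix x y
  assume xy: "{x, y} \<in> edge_image f F" "x \<noteq> y" "(x, y) \<in> (adj (edge_image f F - {{x, y}}))\<^sup>*"
  then obtain e where e: "e \<in> F" "f ` e = {x, y}"
    by (auto simp: edge_image_def)
  from e(1) sub have "e \<in> complete_edges A"
    by blast
  then obtain c d where cd: "e = {c, d}" "c \<in> A" "d \<in> A" "c \<noteq> d"
    by (rule complete_edgesE)
  have "{f c, f d} = {x, y}"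
    using e(2) cd(1) by simp
  then consider "x = f c" "y = f d" | "x = f d" "y = f c"
    by (auto simp: doubleton_eq_iff)
  then obtain a b where ab: "e = {a, b}" "a \<in> A" "b \<in> A" "a \<noteq> b" "x = f a" "y = f b"
    using cd by (cases; metis insert_commute)
  have "edge_image f F - {{x, y}} = edge_image f (F - {e})"
    using edge_image_Diff[OF inj sub, of e] e ab by simp
  moreover have "F - {e} \<subseteq> complete_edges A"
    using sub by blast
  ultimately have "(a, b) \<in> (adj (F - {{a, b}}))\<^sup>*"
    using xy(3) rtrancl_adj_edge_image_iff[OF inj, of "F - {e}" a b] ab by simp
  moreover have "{a, b} \<in> F"
    using e(1) ab(1) by simp
  ultimately show False
    using acyclic ab(4) unfolding acyclic_graph_def by blast
qed

lemma is_tree_on_edge_image: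
  assumes "bij_betw f A B" "is_tree_on A F"
  shows "is_tree_on B (edge_image f F)"
proof -
  have "inj_on f A" "f ` A = B"
    using assms(1) by (auto simp: bij_betw_def)
  then show ?thesis
    using assms(2) edge_image_complete_edges connected_on_edge_image acyclic_graph_edge_image
    unfolding is_tree_on_def by metis
qed

lemma edge_image_inv_into:
  assumes "inj_on f A" "F \<subseteq> complete_edges A"
  shows "edge_image (inv_into A f) (edge_image f F) = F"
proof -
  have "inv_into A f ` f ` e = e" if "e \<in> F" for e
    using that assms by (intro inv_into_image_cancel) (auto simp: complete_edges_def)
  then show ?thesis
    unfolding edge_image_def image_image by simp
qed

lemma card_trees_eq_T:
  assumes "finite S"
  shows "card {F. is_tree_on S F} = T (card S)"
proof -
  obtain f where bij: "bij_betw f S {1..card S}"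
    using assms bij_betw_iff_card[of S "{1..card S}"] by auto
  have bij': "bij_betw (inv_into S f) {1..card S} S"
    using bij by (rule bij_betw_inv_into)
  have "bij_betw (edge_image f) {F. is_tree_on S F} {F. is_tree_on {1..card S} F}"
  proof (rule bij_betw_byWitness[where f' = "edge_image (inv_into S f)"])
    show "\<forall>F\<in>{F. is_tree_on S F}. edge_image (inv_into S f) (edge_image f F) = F"
      using edge_image_inv_into[OF bij_betw_imp_inj_on[OF bij]] by (simp add: is_tree_on_def)
    show "\<forall>F\<in>{F. is_tree_on {1..card S} F}. edge_image f (edge_image (inv_into S f) F) = F"
    proof
      fix F assume "F \<in> {F. is_tree_on {1..card S} F}"
      then have "e \<subseteq> f ` S" if "e \<in> F" for e
        using that bij_betw_imp_surj_on[OF bij] by (auto simp: is_tree_on_def complete_edges_def)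
      then have "f ` inv_into S f ` e = e" if "e \<in> F" for e
        using that by (simp add: image_inv_into_cancel)
      then show "edge_image f (edge_image (inv_into S f) F) = F"
        unfolding edge_image_def image_image[of "\<lambda>e. f ` e"] by simp
    qed
    show "edge_image f ` {F. is_tree_on S F} \<subseteq> {F. is_tree_on {1..card S} F}"
      using is_tree_on_edge_image[OF bij] by blast
    show "edge_image (inv_into S f) ` {F. is_tree_on {1..card S} F} \<subseteq> {F. is_tree_on S F}"
      using is_tree_on_edge_image[OF bij'] by blast
  qed
  then show ?thesis
    unfolding T_def by (rule bij_betw_same_card)
qed

section \<open>The random graph\<close>

definition rg_weight :: "(nat \<Rightarrow> nat set \<Rightarrow> real) \<Rightarrow> nat \<Rightarrow> nat set set \<Rightarrow> real" where
  "rg_weight p n G = (\<Prod>e\<in>G. p n e) * (\<Prod>e\<in>Kn_edges n - G. 1 - p n e)"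

lemma rg_prob_eq_sum:
  "rg_prob p n A = (\<Sum>G\<in>Pow (Kn_edges n). if A G then rg_weight p n G else 0)"
proof -
  have "{G. G \<subseteq> Kn_edges n \<and> A G} = {G \<in> Pow (Kn_edges n). A G}"
    by auto
  then show ?thesis
    unfolding rg_prob_def rg_weight_def
    using sum.inter_filter[OF finite_Pow_iff[THEN iffD2, OF finite_Kn_edges]] by simp
qed

lemma rg_prob_cong:
  "(\<And>G. G \<subseteq> Kn_edges n \<Longrightarrow> A G = B G) \<Longrightarrow> rg_prob p n A = rg_prob p n B"
  unfolding rg_prob_eq_sum by (intro sum.cong) auto

lemma rg_weight_nonneg:
  assumes "\<And>e. e \<in> Kn_edges n \<Longrightarrow> 0 \<le> p n e \<and> p n e \<le> 1" and "G \<subseteq> Kn_edges n"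
  shows "0 \<le> rg_weight p n G"
  unfolding rg_weight_def using assms
  by (intro mult_nonneg_nonneg prod_nonneg) auto

text \<open>Expand \<open>\<Prod>e. (f\<^sub>1 e + f\<^sub>2 e)\<close> over all edges, where \<open>f\<^sub>1\<close> vanishes on \<open>D\<close> and
  \<open>f\<^sub>2\<close> on \<open>F\<close>: only the edge sets containing \<open>F\<close> and avoiding \<open>D\<close> survive.\<close>

lemma rg_prob_edges_fixed:
  assumes F: "F \<subseteq> Kn_edges n" and D: "D \<subseteq> Kn_edges n" and FD: "F \<inter> D = {}"
  shows "rg_prob p n (\<lambda>G. F \<subseteq> G \<and> G \<inter> D = {}) = (\<Prod>e\<in>F. p n e) * (\<Prod>e\<in>D. 1 - p n e)"
proof -
  let ?E = "Kn_edges n"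
  define f1 where "f1 e = (if e \<in> D then 0 else p n e)" for e
  define f2 where "f2 e = (if e \<in> F then 0 else 1 - p n e)" for e
  have summand: "(\<Prod>e\<in>X. f1 e) * (\<Prod>e\<in>?E - X. f2 e)
      = (if F \<subseteq> X \<and> X \<inter> D = {} then rg_weight p n X else 0)" if "X \<subseteq> ?E" for X
  proof (cases "F \<subseteq> X \<and> X \<inter> D = {}")
    case True
    have "(\<Prod>e\<in>X. f1 e) = (\<Prod>e\<in>X. p n e)"
      using True by (intro prod.cong) (auto simp: f1_def)
    moreover have "(\<Prod>e\<in>?E - X. f2 e) = (\<Prod>e\<in>?E - X. 1 - p n e)"
      using True by (intro prod.cong) (auto simp: f2_def)
    ultimately show ?thesis
      using True by (simp add: rg_weight_def)
  next
    case False
    then have "(\<exists>e\<in>X. f1 e = 0) \<or> (\<exists>e\<in>?E - X. f2 e = 0)"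
      using F by (auto simp: f1_def f2_def)
    moreover have "finite X"
      using that finite_Kn_edges finite_subset by blast
    ultimately show ?thesis
      using False finite_Kn_edges by (auto simp: prod_zero_iff)
  qed
  have "(\<Prod>e\<in>?E. f1 e + f2 e) = (\<Prod>e\<in>F \<union> D. f1 e + f2 e)"
    using F D finite_Kn_edges by (intro prod.mono_neutral_right) (auto simp: f1_def f2_def)
  also have "\<dots> = (\<Prod>e\<in>F. f1 e + f2 e) * (\<Prod>e\<in>D. f1 e + f2 e)"
    using FD finite_subset[OF F finite_Kn_edges] finite_subset[OF D finite_Kn_edges]
    by (rule prod.union_disjoint[rotated 2])
  also have "\<dots> = (\<Prod>e\<in>F. p n e) * (\<Prod>e\<in>D. 1 - p n e)"
    using FD by (intro arg_cong2[where f = times] prod.cong) (auto simp: f1_def f2_def)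
  finally have "(\<Prod>e\<in>F. p n e) * (\<Prod>e\<in>D. 1 - p n e)
      = (\<Sum>X\<in>Pow ?E. (\<Prod>e\<in>X. f1 e) * (\<Prod>e\<in>?E - X. f2 e))"
    using prod_add[OF finite_Kn_edges, of f1 f2] by simp
  also have "\<dots> = rg_prob p n (\<lambda>G. F \<subseteq> G \<and> G \<inter> D = {})"
    unfolding rg_prob_eq_sum by (intro sum.cong) (auto simp: summand)
  finally show ?thesis ..
qed

lemma rg_prob_le_sum:
  assumes p: "\<And>e. e \<in> Kn_edges n \<Longrightarrow> 0 \<le> p n e \<and> p n e \<le> 1"
    and fin: "finite I" and cover: "\<And>G. G \<subseteq> Kn_edges n \<Longrightarrow> A G \<Longrightarrow> \<exists>j\<in>I. B j G"
  shows "rg_prob p n A \<le> (\<Sum>j\<in>I. rg_prob p n (B j))"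
proof -
  have pointwise: "(if A G then rg_weight p n G else 0) \<le> (\<Sum>j\<in>I. if B j G then rg_weight p n G else 0)"
    if G: "G \<in> Pow (Kn_edges n)" for G
  proof -
    have nonneg: "0 \<le> (if B j G then rg_weight p n G else 0)" for j
      using rg_weight_nonneg[of n p G, OF p] G by simp
    show ?thesis
    proof (cases "A G")
      case True
      then obtain j where j: "j \<in> I" "B j G"
        using cover[of G] G True by auto
      have "(if B j G then rg_weight p n G else 0) \<le> (\<Sum>j\<in>I. if B j G then rg_weight p n G else 0)"
        by (intro member_le_sum j(1) nonneg fin)
      then show ?thesis
        using True j by simp
    qed (simp add: sum_nonneg nonneg)
  qed
  then have "rg_prob p n A \<le> (\<Sum>G\<in>Pow (Kn_edges n). \<Sum>j\<in>I. if B j G then rg_weight p n G else 0)"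
    unfolding rg_prob_eq_sum by (rule sum_mono)
  also have "\<dots> = (\<Sum>j\<in>I. rg_prob p n (B j))"
    unfolding rg_prob_eq_sum by (rule sum.swap)
  finally show ?thesis .
qed

lemma sum_rg_prob_le:
  assumes p: "\<And>e. e \<in> Kn_edges n \<Longrightarrow> 0 \<le> p n e \<and> p n e \<le> 1"
    and fin: "finite I"
    and disjoint: "\<And>G j k. G \<subseteq> Kn_edges n \<Longrightarrow> j \<in> I \<Longrightarrow> k \<in> I \<Longrightarrow> B j G \<Longrightarrow> B k G \<Longrightarrow> j = k"
    and imp: "\<And>G j. G \<subseteq> Kn_edges n \<Longrightarrow> j \<in> I \<Longrightarrow> B j G \<Longrightarrow> A G"
  shows "(\<Sum>j\<in>I. rg_prob p n (B j)) \<le> rg_prob p n A"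
proof -
  have "(\<Sum>j\<in>I. if B j G then rg_weight p n G else 0) \<le> (if A G then rg_weight p n G else 0)"
    if "G \<in> Pow (Kn_edges n)" for G
  proof -
    have G: "G \<subseteq> Kn_edges n"
      using that by simp
    show ?thesis
    proof (cases "\<exists>j\<in>I. B j G")
      case True
      then obtain j where j: "j \<in> I" "B j G"
        by blast
      have "B k G \<longleftrightarrow> k = j" if "k \<in> I" for k
        using disjoint[OF G j(1) that] j(2) by blast
      then have "(\<Sum>k\<in>I. if B k G then rg_weight p n G else 0)
          = (\<Sum>k\<in>I. if k = j then rg_weight p n G else 0)"
        by (intro sum.cong refl) simp
      also have "\<dots> = rg_weight p n G"
        using j(1) fin by simp
      finally show ?thesis
        using imp[OF G j] by simp
    next
      case False
      then show ?thesis
        using rg_weight_nonneg[of n p G, OF p G] by simp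
    qed
  qed
  then have "(\<Sum>G\<in>Pow (Kn_edges n). \<Sum>j\<in>I. if B j G then rg_weight p n G else 0) \<le> rg_prob p n A"
    unfolding rg_prob_eq_sum by (rule sum_mono)
  then show ?thesis
    unfolding rg_prob_eq_sum by (subst sum.swap)
qed

section \<open>The size of the component of a vertex\<close>

definition cut_edges :: "nat \<Rightarrow> nat set \<Rightarrow> nat set set" where
  "cut_edges n S = {e \<in> Kn_edges n. \<exists>u v. e = {u, v} \<and> u \<in> S \<and> v \<notin> S}"

definition incident_edges :: "nat \<Rightarrow> nat set \<Rightarrow> nat set set" where
  "incident_edges n S = {e \<in> Kn_edges n. e \<inter> S \<noteq> {}}"

lemma component_subset_vertices:
  assumes "G \<subseteq> Kn_edges n" "i \<in> {1..n}"
  shows "component G i \<subseteq> {1..n}"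
proof
  fix x assume "x \<in> component G i"
  then have "(i, x) \<in> (adj G)\<^sup>*"
    by simp
  moreover have "adj G \<subseteq> {1..n} \<times> {1..n}"
    using assms(1) adj_subset_complete_edges unfolding Kn_edges_def by blast
  ultimately show "x \<in> {1..n}"
    using assms(2) by (cases rule: rtranclE) auto
qed

lemma component_disjoint_cut_edges: "G \<inter> cut_edges n (component G i) = {}"
proof (rule ccontr)
  assume "G \<inter> cut_edges n (component G i) \<noteq> {}"
  then obtain u v where "{u, v} \<in> G" "u \<in> component G i" "v \<notin> component G i"
    unfolding cut_edges_def by blast
  then show False
    by (auto simp: adj_def intro: rtrancl.rtrancl_into_rtrancl)
qed

lemma connected_on_component:
  assumes G: "G \<subseteq> Kn_edges n"
  shows "connected_on (component G i) (G \<inter> complete_edges (component G i))"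
proof -
  let ?K = "component G i"
  let ?H = "G \<inter> complete_edges ?K"
  have reach: "(i, x) \<in> (adj ?H)\<^sup>*" if "(i, x) \<in> (adj G)\<^sup>*" for x
    using that
  proof (induction x rule: rtrancl_induct)
    case (step y z)
    then have yz: "{y, z} \<in> G" "y \<in> ?K" "z \<in> ?K"
      by (auto simp: adj_def intro: rtrancl.rtrancl_into_rtrancl)
    moreover have "{y, z} \<in> complete_edges {1..n}"
      using G yz(1) unfolding Kn_edges_def by blast
    ultimately have "y \<noteq> z"
      by (simp add: doubleton_in_complete_edges_iff)
    then have "(y, z) \<in> adj ?H"
      using yz by (simp add: adj_def doubleton_in_complete_edges_iff)
    with step.IH show ?case
      by (rule rtrancl.rtrancl_into_rtrancl)
  qed simp
  show ?thesis
    unfolding connected_on_def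
  proof (intro ballI)
    fix x y assume "x \<in> ?K" "y \<in> ?K"
    then have "(i, x) \<in> (adj ?H)\<^sup>*" "(i, y) \<in> (adj ?H)\<^sup>*"
      using reach by auto
    then show "(x, y) \<in> (adj ?H)\<^sup>*"
      using adj_rtrancl_sym rtrancl_trans by metis
  qed
qed

lemma component_eq_if_tree:
  assumes G: "G \<subseteq> Kn_edges n" and i: "i \<in> S"
    and GF: "G \<inter> incident_edges n S = F" and tree: "is_tree_on S F"
  shows "component G i = S"
proof
  show "S \<subseteq> component G i"
  proof
    fix x assume "x \<in> S"
    then have "(i, x) \<in> (adj F)\<^sup>*"
      using tree i unfolding is_tree_on_def connected_on_def by blast
    moreover have "F \<subseteq> G"
      using GF by blast
    ultimately show "x \<in> component G i"
      using adj_rtrancl_mono by auto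
  qed
  show "component G i \<subseteq> S"
  proof
    fix x assume "x \<in> component G i"
    then have "(i, x) \<in> (adj G)\<^sup>*"
      by simp
    then show "x \<in> S"
    proof (induction x rule: rtrancl_induct)
      case (step y z)
      then have "{y, z} \<in> G \<inter> incident_edges n S"
        using G by (auto simp: adj_def incident_edges_def)
      then have "{y, z} \<in> complete_edges S"
        using GF tree by (auto simp: is_tree_on_def)
      then show "z \<in> S"
        by (simp add: doubleton_in_complete_edges_iff)
    qed (rule i)
  qed
qed

lemma card_subsets_containing:
  assumes "finite V" "i \<in> V" "1 \<le> r"
  shows "card {S. S \<subseteq> V \<and> i \<in> S \<and> card S = r} = (card V - 1) choose (r - 1)"
proof -
  have "bij_betw (\<lambda>S. S - {i}) {S. S \<subseteq> V \<and> i \<in> S \<and> card S = r}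
      {B. B \<subseteq> V - {i} \<and> card B = r - 1}"
  proof (rule bij_betw_byWitness[where f' = "insert i"])
    show "(\<lambda>S. S - {i}) ` {S. S \<subseteq> V \<and> i \<in> S \<and> card S = r} \<subseteq> {B. B \<subseteq> V - {i} \<and> card B = r - 1}"
      using assms(1) by (auto dest: finite_subset)
    show "insert i ` {B. B \<subseteq> V - {i} \<and> card B = r - 1} \<subseteq> {S. S \<subseteq> V \<and> i \<in> S \<and> card S = r}"
    proof (rule image_subsetI)
      fix B assume B: "B \<in> {B. B \<subseteq> V - {i} \<and> card B = r - 1}"
      then have "finite B" "i \<notin> B"
        using assms(1) finite_subset by auto
      then show "insert i B \<in> {S. S \<subseteq> V \<and> i \<in> S \<and> card S = r}"
        using B assms by auto
    qed
  qed auto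
  then have "card {S. S \<subseteq> V \<and> i \<in> S \<and> card S = r} = card {B. B \<subseteq> V - {i} \<and> card B = r - 1}"
    by (rule bij_betw_same_card)
  also have "\<dots> = (card V - 1) choose (r - 1)"
    using assms(1,2) by (simp add: n_subsets)
  finally show ?thesis .
qed

lemma card_cut_edges_ge:
  assumes S: "S \<subseteq> {1..n}"
  shows "card S * (n - card S) \<le> card (cut_edges n S)"
proof -
  let ?g = "\<lambda>(u, v). {u, v} :: nat set"
  have "inj_on ?g (S \<times> ({1..n} - S))"
    by (auto simp: inj_on_def doubleton_eq_iff)
  moreover have "?g ` (S \<times> ({1..n} - S)) \<subseteq> cut_edges n S"
    using S unfolding cut_edges_def Kn_edges_def
    by (force simp: doubleton_in_complete_edges_iff)
  moreover have "finite (cut_edges n S)"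
    using finite_Kn_edges[of n] unfolding cut_edges_def by simp
  ultimately have "card (S \<times> ({1..n} - S)) \<le> card (cut_edges n S)"
    by (rule card_inj_on_le)
  moreover have "card (S \<times> ({1..n} - S)) = card S * (n - card S)"
    using S finite_subset[OF S] by (simp add: card_cartesian_product card_Diff_subset)
  ultimately show ?thesis by simp
qed

lemma card_incident_edges_le:
  assumes S: "S \<subseteq> {1..n}"
  shows "card (incident_edges n S) \<le> card S * n"
proof -
  let ?g = "\<lambda>(u, v). {u, v} :: nat set"
  have "incident_edges n S \<subseteq> ?g ` (S \<times> {1..n})"
  proof
    fix e assume e: "e \<in> incident_edges n S"
    then have "e \<in> complete_edges {1..n}" "e \<inter> S \<noteq> {}"
      unfolding incident_edges_def Kn_edges_def by auto
    then obtain a b where ab: "e = {a, b}" "a \<in> {1..n}" "b \<in> {1..n}" "e \<inter> S \<noteq> {}"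
      by (meson complete_edgesE)
    then have "(a, b) \<in> S \<times> {1..n} \<or> (b, a) \<in> S \<times> {1..n}"
      by auto
    then show "e \<in> ?g ` (S \<times> {1..n})"
      using ab(1) by (auto simp: insert_commute)
  qed
  then have "card (incident_edges n S) \<le> card (?g ` (S \<times> {1..n}))"
    using finite_subset[OF S] by (intro card_mono) auto
  also have "\<dots> \<le> card (S \<times> {1..n})"
    by (rule card_image_le) (simp add: finite_subset[OF S])
  finally show ?thesis
    by (simp add: card_cartesian_product)
qed

definition rooted_trees :: "nat \<Rightarrow> nat \<Rightarrow> nat \<Rightarrow> (nat set \<times> nat set set) set" where
  "rooted_trees n i r = (SIGMA S:{S. S \<subseteq> {1..n} \<and> i \<in> S \<and> card S = r}. {F. is_tree_on S F})"

lemma rooted_treesD: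
  assumes "(S, F) \<in> rooted_trees n i r"
  shows "S \<subseteq> {1..n}" "i \<in> S" "card S = r" "is_tree_on S F" "finite S"
    and "F \<subseteq> Kn_edges n" "card F = r - 1"
proof -
  show S: "S \<subseteq> {1..n}" "i \<in> S" "card S = r" and tree: "is_tree_on S F"
    using assms by (auto simp: rooted_trees_def)
  show "finite S"
    using S(1) finite_subset by blast
  then show "card F = r - 1"
    using card_tree_edges[OF _ _ tree] S by auto
  show "F \<subseteq> Kn_edges n"
    using tree complete_edges_mono[OF S(1)] unfolding is_tree_on_def Kn_edges_def by blast
qed

lemma finite_rooted_trees: "finite (rooted_trees n i r)"
  unfolding rooted_trees_def
  by (intro finite_SigmaI finite_trees) (auto intro: finite_subset)

lemma card_rooted_trees:
  assumes "i \<in> {1..n}" "1 \<le> r"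
  shows "card (rooted_trees n i r) = ((n - 1) choose (r - 1)) * T r"
proof -
  let ?SS = "{S. S \<subseteq> {1..n} \<and> i \<in> S \<and> card S = r}"
  have "card (rooted_trees n i r) = (\<Sum>S\<in>?SS. card {F. is_tree_on S F})"
    unfolding rooted_trees_def
    by (intro card_SigmaI) (auto intro!: finite_trees intro: finite_subset)
  also have "\<dots> = (\<Sum>S\<in>?SS. T r)"
    using card_trees_eq_T finite_subset[of _ "{1..n}"] by (intro sum.cong refl) auto
  also have "\<dots> = ((n - 1) choose (r - 1)) * T r"
    using card_subsets_containing[of "{1..n}" i r] assms by simp
  finally show ?thesis .
qed

context
  fixes p :: "nat \<Rightarrow> nat set \<Rightarrow> real" and n :: nat and lo hi :: real
  assumes p_bounds: "\<And>e. e \<in> Kn_edges n \<Longrightarrow> lo \<le> p n e \<and> p n e \<le> hi"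
    and lo_nonneg: "0 \<le> lo" and lo_le_hi: "lo \<le> hi" and hi_le_1: "hi \<le> 1"
begin

lemma p_in_unit_interval: "e \<in> Kn_edges n \<Longrightarrow> 0 \<le> p n e \<and> p n e \<le> 1"
  using p_bounds[of e] lo_nonneg hi_le_1 by auto

lemma rg_prob_tree_and_no_cut_edge_le:
  assumes j: "(S, F) \<in> rooted_trees n i r"
  shows "rg_prob p n (\<lambda>G. F \<subseteq> G \<and> G \<inter> cut_edges n S = {}) \<le> hi ^ (r - 1) * (1 - lo) ^ (r * (n - r))"
proof -
  note SF = rooted_treesD[OF j]
  have cut: "cut_edges n S \<subseteq> Kn_edges n"
    unfolding cut_edges_def by blast
  have "F \<inter> cut_edges n S = {}"
    using SF(4) unfolding is_tree_on_def cut_edges_def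
    by (auto simp: doubleton_in_complete_edges_iff)
  then have "rg_prob p n (\<lambda>G. F \<subseteq> G \<and> G \<inter> cut_edges n S = {})
      = (\<Prod>e\<in>F. p n e) * (\<Prod>e\<in>cut_edges n S. 1 - p n e)"
    by (rule rg_prob_edges_fixed[OF SF(6) cut])
  also have "\<dots> \<le> hi ^ (r - 1) * (1 - lo) ^ (r * (n - r))"
  proof (rule mult_mono)
    have "(\<Prod>e\<in>F. p n e) \<le> (\<Prod>e\<in>F. hi)"
      using SF(6) p_in_unit_interval p_bounds by (intro prod_mono) blast
    then show "(\<Prod>e\<in>F. p n e) \<le> hi ^ (r - 1)"
      using SF(7) by simp
    have "(\<Prod>e\<in>cut_edges n S. 1 - p n e) \<le> (\<Prod>e\<in>cut_edges n S. 1 - lo)"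
      using cut p_in_unit_interval p_bounds by (intro prod_mono) force
    also have "\<dots> \<le> (1 - lo) ^ (r * (n - r))"
      using card_cut_edges_ge[OF SF(1)] SF(3) lo_nonneg lo_le_hi hi_le_1
      by (simp add: power_decreasing)
    finally show "(\<Prod>e\<in>cut_edges n S. 1 - p n e) \<le> (1 - lo) ^ (r * (n - r))" .
    show "0 \<le> hi ^ (r - 1)"
      using lo_nonneg lo_le_hi by simp
    show "0 \<le> (\<Prod>e\<in>cut_edges n S. 1 - p n e)"
      using cut p_in_unit_interval by (intro prod_nonneg) force
  qed
  finally show ?thesis .
qed

lemma rg_prob_incident_edges_eq_tree_ge:
  assumes j: "(S, F) \<in> rooted_trees n i r"
  shows "lo ^ (r - 1) * (1 - hi) ^ (r * n) \<le> rg_prob p n (\<lambda>G. G \<inter> incident_edges n S = F)"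
proof -
  note SF = rooted_treesD[OF j]
  let ?M = "incident_edges n S - F"
  have M: "?M \<subseteq> Kn_edges n"
    unfolding incident_edges_def by blast
  have FM: "F \<subseteq> incident_edges n S"
    using SF(2,4,6) unfolding is_tree_on_def incident_edges_def
    by (auto elim!: complete_edgesE)
  have "lo ^ (r - 1) * (1 - hi) ^ (r * n) \<le> (\<Prod>e\<in>F. p n e) * (\<Prod>e\<in>?M. 1 - p n e)"
  proof (rule mult_mono)
    have "lo ^ (r - 1) = (\<Prod>e\<in>F. lo)"
      using SF(7) by simp
    also have "\<dots> \<le> (\<Prod>e\<in>F. p n e)"
      using SF(6) p_bounds lo_nonneg by (intro prod_mono) blast
    finally show "lo ^ (r - 1) \<le> (\<Prod>e\<in>F. p n e)" .
    have "card ?M \<le> card (incident_edges n S)"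
      using finite_Kn_edges[of n] unfolding incident_edges_def by (intro card_mono) auto
    then have "card ?M \<le> r * n"
      using card_incident_edges_le[OF SF(1)] SF(3) by simp
    then have "(1 - hi) ^ (r * n) \<le> (1 - hi) ^ card ?M"
      using lo_nonneg lo_le_hi hi_le_1 by (intro power_decreasing) auto
    also have "\<dots> = (\<Prod>e\<in>?M. 1 - hi)"
      by simp
    also have "\<dots> \<le> (\<Prod>e\<in>?M. 1 - p n e)"
      using M p_bounds hi_le_1 by (intro prod_mono) force
    finally show "(1 - hi) ^ (r * n) \<le> (\<Prod>e\<in>?M. 1 - p n e)" .
    show "0 \<le> (\<Prod>e\<in>F. p n e)"
      using SF(6) p_in_unit_interval by (intro prod_nonneg) blast
    show "0 \<le> (1 - hi) ^ (r * n)"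
      using hi_le_1 by simp
  qed
  also have "\<dots> = rg_prob p n (\<lambda>G. F \<subseteq> G \<and> G \<inter> ?M = {})"
    by (rule rg_prob_edges_fixed[OF SF(6) M, symmetric]) blast
  also have "\<dots> = rg_prob p n (\<lambda>G. G \<inter> incident_edges n S = F)"
    using FM by (intro rg_prob_cong) auto
  finally show ?thesis .
qed

lemma rg_prob_component_card_le:
  assumes i: "i \<in> {1..n}" and r: "1 \<le> r"
  shows "rg_prob p n (\<lambda>G. card (component G i) = r)
    \<le> real ((n - 1) choose (r - 1)) * T r * hi ^ (r - 1) * (1 - lo) ^ (r * (n - r))"
proof -
  let ?B = "\<lambda>(S, F) G. F \<subseteq> G \<and> G \<inter> cut_edges n S = {}"
  have "rg_prob p n (\<lambda>G. card (component G i) = r) \<le> (\<Sum>j\<in>rooted_trees n i r. rg_prob p n (?B j))"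
  proof (rule rg_prob_le_sum[of n p, OF p_in_unit_interval finite_rooted_trees])
    fix G assume G: "G \<subseteq> Kn_edges n" and card: "card (component G i) = r"
    let ?K = "component G i"
    have "finite (G \<inter> complete_edges ?K)"
      using finite_subset[OF G finite_Kn_edges] by simp
    then obtain F where F: "F \<subseteq> G" "is_tree_on ?K F"
      using exists_spanning_tree[OF _ _ connected_on_component[OF G]] by blast
    then have "(?K, F) \<in> rooted_trees n i r"
      using component_subset_vertices[OF G i] card by (simp add: rooted_trees_def)
    moreover have "?B (?K, F) G"
      using F component_disjoint_cut_edges by auto
    ultimately show "\<exists>j\<in>rooted_trees n i r. ?B j G"
      by blast
  qed
  also have "\<dots> \<le> (\<Sum>j\<in>rooted_trees n i r. hi ^ (r - 1) * (1 - lo) ^ (r * (n - r)))"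
  proof (rule sum_mono)
    fix j assume "j \<in> rooted_trees n i r"
    then obtain S F where SF: "j = (S, F)" "(S, F) \<in> rooted_trees n i r"
      by (cases j) auto
    then show "rg_prob p n (?B j) \<le> hi ^ (r - 1) * (1 - lo) ^ (r * (n - r))"
      using rg_prob_tree_and_no_cut_edge_le[OF SF(2)] by simp
  qed
  also have "\<dots> = real ((n - 1) choose (r - 1)) * T r * hi ^ (r - 1) * (1 - lo) ^ (r * (n - r))"
    using card_rooted_trees[OF i r] by simp
  finally show ?thesis .
qed

lemma rg_prob_component_card_ge:
  assumes i: "i \<in> {1..n}" and r: "1 \<le> r"
  shows "real ((n - 1) choose (r - 1)) * T r * lo ^ (r - 1) * (1 - hi) ^ (r * n)
    \<le> rg_prob p n (\<lambda>G. card (component G i) = r)"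
proof -
  let ?B = "\<lambda>(S, F) G. G \<inter> incident_edges n S = F"
  have component_eq: "component G i = fst j"
    if G: "G \<subseteq> Kn_edges n" and j: "j \<in> rooted_trees n i r" and B: "?B j G" for G j
  proof -
    obtain S F where SF: "j = (S, F)"
      by (cases j)
    then show ?thesis
      using component_eq_if_tree[OF G] rooted_treesD(2,4)[of S F n i r] j B by simp
  qed
  have "real ((n - 1) choose (r - 1)) * T r * lo ^ (r - 1) * (1 - hi) ^ (r * n)
      = (\<Sum>j\<in>rooted_trees n i r. lo ^ (r - 1) * (1 - hi) ^ (r * n))"
    using card_rooted_trees[OF i r] by simp
  also have "\<dots> \<le> (\<Sum>j\<in>rooted_trees n i r. rg_prob p n (?B j))"
  proof (rule sum_mono)
    fix j assume "j \<in> rooted_trees n i r"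
    then obtain S F where SF: "j = (S, F)" "(S, F) \<in> rooted_trees n i r"
      by (cases j) auto
    then show "lo ^ (r - 1) * (1 - hi) ^ (r * n) \<le> rg_prob p n (?B j)"
      using rg_prob_incident_edges_eq_tree_ge[OF SF(2)] by simp
  qed
  also have "\<dots> \<le> rg_prob p n (\<lambda>G. card (component G i) = r)"
  proof (rule sum_rg_prob_le[of n p, OF p_in_unit_interval finite_rooted_trees])
    fix G j k assume G: "G \<subseteq> Kn_edges n" and jk: "j \<in> rooted_trees n i r" "k \<in> rooted_trees n i r"
      and B: "?B j G" "?B k G"
    obtain S F S' F' where SF: "j = (S, F)" "k = (S', F')"
      by (cases j, cases k)
    have "S = S'"
      using component_eq[OF G jk(1) B(1)] component_eq[OF G jk(2) B(2)] SF by simp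
    then show "j = k"
      using B SF by simp
  next
    fix G j assume G: "G \<subseteq> Kn_edges n" and j: "j \<in> rooted_trees n i r" and B: "?B j G"
    obtain S F where SF: "j = (S, F)"
      by (cases j)
    then show "card (component G i) = r"
      using component_eq[OF G j B] rooted_treesD(3)[of S F n i r] j by simp
  qed
  finally show ?thesis .
qed

end

section \<open>Asymptotic estimates\<close>

lemma choose_pred_mult_fact_le: "real ((n - 1) choose k) * fact k \<le> real n ^ k"
proof -
  have "((n - 1) choose k) * fact k \<le> (n - 1) ^ k"
    by (rule binomial_fact_pow)
  also have "\<dots> \<le> n ^ k"
    by (intro power_mono) auto
  finally show ?thesis
    by (metis of_nat_fact of_nat_le_iff of_nat_mult of_nat_power)
qed

lemma power_le_choose_pred_mult_fact:
  assumes "k < n" "0 \<le> x" "x \<le> real n - real k"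
  shows "x ^ k \<le> real ((n - 1) choose k) * fact k"
proof -
  have "x ^ k = (\<Prod>i = 0..<k. x)"
    by simp
  also have "\<dots> \<le> (\<Prod>i = 0..<k. real (n - 1) - of_nat i)"
    using assms by (intro prod_mono) (auto simp: of_nat_diff)
  also have "\<dots> = real ((n - 1) choose k) * fact k"
    by (simp add: binomial_gbinomial gbinomial_mult_fact')
  finally show ?thesis .
qed

lemma choose_pred_mult_power_le:
  fixes x :: real
  assumes "0 \<le> x" "0 < n"
  shows "real ((n - 1) choose k) * (x / n) ^ k \<le> x ^ k / fact k"
proof -
  have "real ((n - 1) choose k) * fact k * (x / n) ^ k \<le> real n ^ k * (x / n) ^ k"
    using assms by (intro mult_right_mono choose_pred_mult_fact_le) auto
  also have "\<dots> = x ^ k"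
    using assms by (simp add: power_divide)
  finally show ?thesis
    by (simp add: field_simps)
qed

lemma power_le_choose_pred_mult_power:
  fixes c x :: real
  assumes "k < n" "0 \<le> c" "0 \<le> x" "c * n \<le> real n - real k"
  shows "(c * x) ^ k \<le> real ((n - 1) choose k) * fact k * (x / n) ^ k"
proof -
  have "(c * n) ^ k * (x / n) ^ k \<le> real ((n - 1) choose k) * fact k * (x / n) ^ k"
    using assms by (intro mult_right_mono power_le_choose_pred_mult_fact) auto
  moreover have "(c * n) ^ k * (x / n) ^ k = (c * x) ^ k"
    using assms(1) by (simp add: power_mult_distrib[symmetric])
  ultimately show ?thesis
    by simp
qed

lemma power_one_minus_le_exp:
  fixes x :: real
  assumes "x \<le> 1"
  shows "(1 - x) ^ m \<le> exp (- (x * m))"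
proof -
  have "(1 - x) ^ m \<le> exp (- x) ^ m"
    using assms exp_ge_add_one_self[of "- x"] by (intro power_mono) auto
  then show ?thesis
    by (simp add: exp_of_nat_mult[symmetric] mult.commute)
qed

lemma power_one_minus_div_le_exp:
  fixes x \<epsilon> :: real
  assumes "0 \<le> x" "x \<le> n" "0 < n" "r \<le> n" "r \<le> \<epsilon> * n"
  shows "(1 - x / n) ^ (r * (n - r)) \<le> exp (- (x * (1 - \<epsilon>) * r))"
proof -
  have "x * (1 - \<epsilon>) * r \<le> x * ((n - r) / n) * r"
    using assms by (intro mult_right_mono mult_left_mono) (auto simp: field_simps)
  also have "\<dots> = x / n * real (r * (n - r))"
    using assms(4) by (simp add: of_nat_diff)
  finally have "exp (- (x / n * real (r * (n - r)))) \<le> exp (- (x * (1 - \<epsilon>) * r))"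
    by simp
  moreover have "(1 - x / n) ^ (r * (n - r)) \<le> exp (- (x / n * real (r * (n - r))))"
    using assms by (intro power_one_minus_le_exp) simp
  ultimately show ?thesis
    by linarith
qed

lemma exp_le_power_one_minus:
  fixes x :: real
  assumes "0 \<le> x" "x \<le> 1/2"
  shows "exp (- (x * m) - 2 * x\<^sup>2 * m) \<le> (1 - x) ^ m"
proof -
  have "exp (- x - 2 * x\<^sup>2) \<le> exp (ln (1 - x))"
    using ln_one_minus_pos_lower_bound[OF assms] by simp
  then have "exp (- x - 2 * x\<^sup>2) ^ m \<le> (1 - x) ^ m"
    using assms by (intro power_mono) auto
  then show ?thesis
    by (simp add: exp_of_nat_mult[symmetric] algebra_simps)
qed

lemma add_le_mult_exp:
  fixes C a :: real
  assumes "0 < C"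
  shows "C + a \<le> C * exp (a / C)"
  using assms exp_ge_add_one_self[of "a / C"] by (simp add: field_simps)

lemma mult_exp_le_diff:
  fixes C a :: real
  assumes "0 < C" "0 \<le> a" "a \<le> C / 2"
  shows "C * exp (- (2 * a / C)) \<le> C - a"
proof -
  have x: "0 \<le> a / C" "a / C \<le> 1/2"
    using assms by (auto simp: field_simps)
  have "(a / C)\<^sup>2 \<le> a / C * (1/2)"
    using mult_left_mono[OF x(2) x(1)] by (simp add: power2_eq_square)
  then have "exp (- (2 * a / C)) \<le> exp (- (a / C) - 2 * (a / C)\<^sup>2)"
    by simp
  also have "\<dots> \<le> 1 - a / C"
    using exp_le_power_one_minus[OF x, of 1] by simp
  finally show ?thesis
    using assms by (simp add: field_simps)
qed

lemma upper_bound_as_power: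
  assumes "0 < C" "r = Suc k"
  shows "t * exp (- real r) / (C * fact k) * exp (- (delta C - C * \<epsilon> - \<omega>) * r)
    = t / fact k * C ^ k * exp ((C * \<epsilon> - C + \<omega>) * r)"
proof -
  have "exp (- real r) * exp (- (delta C - C * \<epsilon> - \<omega>) * r)
      = exp (r * ln C) * exp ((C * \<epsilon> - C + \<omega>) * r)"
    unfolding delta_def mult_exp_exp by (simp add: algebra_simps)
  also have "exp (r * ln C) = C ^ r"
    using assms(1) by (simp add: exp_of_nat_mult)
  finally show ?thesis
    using assms by (simp add: field_simps)
qed

lemma nat_le_fraction_bounds:
  fixes \<epsilon> :: real and n r :: nat
  assumes "\<epsilon> < 1" "1 \<le> r" "r \<le> \<epsilon> * n"
  shows "0 < \<epsilon>" "0 < n" "r \<le> n"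
proof -
  have "0 < \<epsilon> * n"
    using assms by linarith
  then show "0 < \<epsilon>" "0 < n"
    by (auto simp: zero_less_mult_iff)
  then have "\<epsilon> * n \<le> n"
    using assms(1) by simp
  then show "r \<le> n"
    using assms(3) by linarith
qed

lemma lower_exponent_bound:
  fixes C a d \<epsilon> \<omega> s k r :: real
  assumes "0 \<le> a" "0 \<le> d" "0 \<le> s" "d + a + s \<le> \<omega> / 3" "0 < \<epsilon>" "k \<le> r" "1 \<le> r"
  shows "- (C + \<omega>) * r - 2 * \<epsilon> + 2 * \<omega> / 3 \<le> k * (- d) + (- (C + a) * r - s * r)"
proof -
  have "0 \<le> \<omega>"
    using assms(1-4) by linarith
  then have "2 * \<omega> / 3 * 1 \<le> 2 * \<omega> / 3 * r"
    using assms(7) by (intro mult_left_mono) auto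
  moreover have "k * d \<le> r * d"
    using assms by (intro mult_right_mono) auto
  moreover have "(d + a + s) * r \<le> \<omega> / 3 * r"
    using assms by (intro mult_right_mono) auto
  ultimately show ?thesis
    using assms(5) by (simp add: algebra_simps)
qed

lemma component_prob_upper_estimate:
  fixes C \<epsilon> \<omega> a t :: real and n r :: nat
  assumes C: "0 < C" "C \<le> n" and \<epsilon>: "\<epsilon> < 1" and a: "0 \<le> a" "a \<le> C"
    and \<omega>: "a / C + a \<le> \<omega>" and r: "1 \<le> r" "r \<le> \<epsilon> * n" and t: "0 \<le> t"
  shows "real ((n - 1) choose (r - 1)) * t * ((C + a) / n) ^ (r - 1) * (1 - (C - a) / n) ^ (r * (n - r))
    \<le> t * exp (- real r) / (C * fact (r - 1)) * exp (- (delta C - C * \<epsilon> - \<omega>) * r)"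
proof -
  obtain k where rk: "r = Suc k"
    using r(1) by (cases r) auto
  note nat_le_fraction_bounds[OF \<epsilon> r]
  then have n: "0 < real n" and \<epsilon>_pos: "0 < \<epsilon>" and rn: "r \<le> n"
    by auto
  have Ca: "(C + a) ^ k \<le> C ^ k * exp (k * (a / C))"
  proof -
    have "(C + a) ^ k \<le> (C * exp (a / C)) ^ k"
      using C a add_le_mult_exp[OF C(1)] by (intro power_mono) auto
    then show ?thesis
      by (simp only: power_mult_distrib exp_of_nat_mult)
  qed
  have exponent: "k * (a / C) - (C - a) * (1 - \<epsilon>) * r \<le> (C * \<epsilon> - C + \<omega>) * r"
  proof -
    have "k * (a / C) \<le> r * (a / C)"
      using rk a C by (intro mult_right_mono) auto
    moreover have "a * (1 - \<epsilon>) * r \<le> a * r"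
      using a \<epsilon>_pos by (intro mult_right_mono mult_left_le) auto
    ultimately have "k * (a / C) + a * (1 - \<epsilon>) * r \<le> (a / C + a) * r"
      by (simp add: algebra_simps)
    also have "\<dots> \<le> \<omega> * r"
      using \<omega> by (simp add: mult_right_mono)
    finally show ?thesis
      by (simp add: algebra_simps)
  qed
  have "real ((n - 1) choose k) * t * ((C + a) / n) ^ k * (1 - (C - a) / n) ^ (r * (n - r))
      = t * (real ((n - 1) choose k) * ((C + a) / n) ^ k) * (1 - (C - a) / n) ^ (r * (n - r))"
    by (simp only: mult_ac)
  also have "\<dots> \<le> t * ((C + a) ^ k / fact k) * exp (- ((C - a) * (1 - \<epsilon>) * r))"
    using choose_pred_mult_power_le[of "C + a" n k] power_one_minus_div_le_exp[of "C - a" n r \<epsilon>]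
      t C a n rn r(2) by (intro mult_mono mult_left_mono) auto
  also have "\<dots> = t / fact k * (C + a) ^ k * exp (- ((C - a) * (1 - \<epsilon>) * r))"
    by simp
  also have "\<dots> \<le> t / fact k * (C ^ k * exp (k * (a / C))) * exp (- ((C - a) * (1 - \<epsilon>) * r))"
    using Ca t by (intro mult_right_mono mult_left_mono) auto
  also have "\<dots> = t / fact k * C ^ k * (exp (k * (a / C)) * exp (- ((C - a) * (1 - \<epsilon>) * r)))"
    by (simp only: mult.assoc)
  also have "\<dots> \<le> t / fact k * C ^ k * exp ((C * \<epsilon> - C + \<omega>) * r)"
    using exponent t C unfolding mult_exp_exp by (intro mult_left_mono) auto
  also have "\<dots> = t * exp (- real r) / (C * fact k) * exp (- (delta C - C * \<epsilon> - \<omega>) * r)"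
    using upper_bound_as_power[OF C(1) rk] by simp
  finally show ?thesis
    unfolding rk by simp
qed

lemma lower_bound_as_power:
  assumes "0 < C" "\<epsilon> < 1" "r = Suc k"
  shows "1 / (C * (1 - \<epsilon>)) * (t * exp (- real r) / fact k)
      * exp (- (delta C - ln (1 - \<epsilon>) + \<omega>) * r) * exp (- 2 * \<epsilon> + 2 * \<omega> / 3)
    = t / fact k * ((1 - \<epsilon>) * C) ^ k * exp (- (C + \<omega>) * r - 2 * \<epsilon> + 2 * \<omega> / 3)"
proof -
  have "ln ((1 - \<epsilon>) * C) = ln (1 - \<epsilon>) + ln C"
    using assms by (intro ln_mult_pos) auto
  then have "exp (- real r) * exp (- (delta C - ln (1 - \<epsilon>) + \<omega>) * r) * exp (- 2 * \<epsilon> + 2 * \<omega> / 3)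
      = exp (r * ln ((1 - \<epsilon>) * C)) * exp (- (C + \<omega>) * r - 2 * \<epsilon> + 2 * \<omega> / 3)"
    unfolding delta_def mult_exp_exp by (simp add: algebra_simps)
  also have "exp (r * ln ((1 - \<epsilon>) * C)) = ((1 - \<epsilon>) * C) ^ r"
    using assms(1,2) by (simp add: exp_of_nat_mult)
  finally have exps: "exp (- real r) * exp (- (delta C - ln (1 - \<epsilon>) + \<omega>) * r) * exp (- 2 * \<epsilon> + 2 * \<omega> / 3)
      = (1 - \<epsilon>) * C * (((1 - \<epsilon>) * C) ^ k * exp (- (C + \<omega>) * r - 2 * \<epsilon> + 2 * \<omega> / 3))"
    using assms(3) by simp
  have "1 / (C * (1 - \<epsilon>)) * (t * exp (- real r) / fact k)
      * exp (- (delta C - ln (1 - \<epsilon>) + \<omega>) * r) * exp (- 2 * \<epsilon> + 2 * \<omega> / 3)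
    = t / fact k / ((1 - \<epsilon>) * C) * (exp (- real r) * exp (- (delta C - ln (1 - \<epsilon>) + \<omega>) * r)
      * exp (- 2 * \<epsilon> + 2 * \<omega> / 3))"
    by (simp add: field_simps)
  also have "\<dots> = t / fact k * ((1 - \<epsilon>) * C) ^ k * exp (- (C + \<omega>) * r - 2 * \<epsilon> + 2 * \<omega> / 3)"
    unfolding exps using assms(1,2) by simp
  finally show ?thesis .
qed

lemma component_prob_lower_estimate:
  fixes C \<epsilon> \<omega> a t :: real and n r :: nat
  assumes C: "0 < C" and \<epsilon>: "\<epsilon> < 1" and a: "0 \<le> a" "a \<le> C / 2" and n: "2 * (C + a) \<le> n"
    and \<omega>: "2 * a / C + a + 2 * (C + a)\<^sup>2 / n \<le> \<omega> / 3"
    and r: "1 \<le> r" "r \<le> \<epsilon> * n" and t: "0 \<le> t"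
  shows "1 / (C * (1 - \<epsilon>)) * (t * exp (- real r) / fact (r - 1))
      * exp (- (delta C - ln (1 - \<epsilon>) + \<omega>) * r) * exp (- 2 * \<epsilon> + 2 * \<omega> / 3)
    \<le> real ((n - 1) choose (r - 1)) * t * ((C - a) / n) ^ (r - 1) * (1 - (C + a) / n) ^ (r * n)"
proof -
  obtain k where rk: "r = Suc k"
    using r(1) by (cases r) auto
  note nat_le_fraction_bounds[OF \<epsilon> r]
  then have n_pos: "0 < real n" and \<epsilon>_pos: "0 < \<epsilon>" and rn: "r \<le> n"
    by auto
  define B where "B = real ((n - 1) choose k)"
  define lo where "lo = (C - a) / n"
  define hi where "hi = (C + a) / n"
  have lo: "0 \<le> lo" and hi: "0 \<le> hi" "hi \<le> 1/2"
    using C a n n_pos by (auto simp: lo_def hi_def field_simps)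
  have "(1 - \<epsilon>) * n \<le> real n - real k"
    using rk r(2) by (simp add: left_diff_distrib)
  then have binom: "((1 - \<epsilon>) * (C - a)) ^ k \<le> B * fact k * lo ^ k"
    unfolding B_def lo_def using rk rn \<epsilon> a by (intro power_le_choose_pred_mult_power) auto
  have diff: "((1 - \<epsilon>) * (C * exp (- (2 * a / C)))) ^ k \<le> ((1 - \<epsilon>) * (C - a)) ^ k"
    using mult_exp_le_diff[OF C a] \<epsilon> C by (intro power_mono mult_left_mono) auto
  have isolated: "exp (- (C + a) * r - 2 * (C + a)\<^sup>2 / n * r) \<le> (1 - hi) ^ (r * n)"
  proof -
    have eq: "- (C + a) * r - 2 * (C + a)\<^sup>2 / n * r = - (hi * real (r * n)) - 2 * hi\<^sup>2 * real (r * n)"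
      using n_pos by (simp add: hi_def power2_eq_square field_simps)
    show ?thesis
      unfolding eq by (rule exp_le_power_one_minus[OF hi])
  qed
  have exponent: "- (C + \<omega>) * r - 2 * \<epsilon> + 2 * \<omega> / 3
      \<le> k * (- (2 * a / C)) + (- (C + a) * r - 2 * (C + a)\<^sup>2 / n * r)"
    using a C n_pos \<epsilon>_pos \<omega> rk by (intro lower_exponent_bound) auto
  have "1 / (C * (1 - \<epsilon>)) * (t * exp (- real r) / fact k)
      * exp (- (delta C - ln (1 - \<epsilon>) + \<omega>) * r) * exp (- 2 * \<epsilon> + 2 * \<omega> / 3)
    = t / fact k * ((1 - \<epsilon>) * C) ^ k * exp (- (C + \<omega>) * r - 2 * \<epsilon> + 2 * \<omega> / 3)"
    using lower_bound_as_power[OF C \<epsilon> rk] .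
  also have "\<dots> \<le> t / fact k * ((1 - \<epsilon>) * C) ^ k
      * exp (k * (- (2 * a / C)) + (- (C + a) * r - 2 * (C + a)\<^sup>2 / n * r))"
    using exponent t \<epsilon> C by (intro mult_left_mono) auto
  also have "\<dots> = t / fact k * ((1 - \<epsilon>) * (C * exp (- (2 * a / C)))) ^ k
      * exp (- (C + a) * r - 2 * (C + a)\<^sup>2 / n * r)"
    by (simp only: exp_add exp_of_nat_mult power_mult_distrib mult_ac)
  also have "\<dots> \<le> t / fact k * (B * fact k * lo ^ k) * (1 - hi) ^ (r * n)"
    using diff binom isolated t hi lo \<epsilon> C
    by (intro mult_mono mult_left_mono order_trans[OF diff binom]) (auto simp: B_def)
  also have "\<dots> = B * t * lo ^ k * (1 - hi) ^ (r * n)"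
    by simp
  finally show ?thesis
    unfolding B_def lo_def hi_def rk by simp
qed

lemma component_size_prob_bounds:
  fixes C \<epsilon> \<omega> a :: real and p :: "nat \<Rightarrow> nat set \<Rightarrow> real"
  assumes C: "0 < C" and \<epsilon>: "\<epsilon> < 1"
    and p: "\<And>e. e \<in> Kn_edges n \<Longrightarrow> (C - a) / n \<le> p n e \<and> p n e \<le> (C + a) / n"
    and a: "0 \<le> a" "a \<le> C / 2" "a * (2 + C) \<le> \<omega> * C / 6"
    and n: "4 * C \<le> n" "27 * C\<^sup>2 \<le> \<omega> * n"
    and i: "i \<in> {1..n}" and r: "1 \<le> r" "r \<le> \<epsilon> * n"
  shows "rg_prob p n (\<lambda>G. card (component G i) = r)
      \<le> T r * exp (- real r) / (C * fact (r - 1)) * exp (- (delta C - C * \<epsilon> - \<omega>) * r)"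
    and "1 / (C * (1 - \<epsilon>)) * (T r * exp (- real r) / fact (r - 1))
      * exp (- (delta C - ln (1 - \<epsilon>) + \<omega>) * r) * exp (- 2 * \<epsilon> + 2 * \<omega> / 3)
      \<le> rg_prob p n (\<lambda>G. card (component G i) = r)"
proof -
  have n_pos: "0 < real n"
    using n(1) C by linarith
  have a_small: "2 * a / C + a \<le> \<omega> / 6"
    using a(3) C by (simp add: field_simps)
  have "2 * (C + a)\<^sup>2 \<le> 2 * (3 / 2 * C)\<^sup>2"
    using a C by (intro mult_left_mono power_mono) auto
  also have "\<dots> \<le> \<omega> / 6 * n"
    using n(2) by (simp add: power2_eq_square)
  finally have n_large: "2 * (C + a)\<^sup>2 / n \<le> \<omega> / 6"
    using n_pos by (simp add: field_simps)
  have probs: "0 \<le> (C - a) / n" "(C - a) / n \<le> (C + a) / n" "(C + a) / n \<le> 1"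
    using a C n n_pos by (auto simp: divide_right_mono)
  have "0 \<le> a / C" "2 * a / C = 2 * (a / C)"
    using a C by auto
  then have upper: "C \<le> n" "a \<le> C" "a / C + a \<le> \<omega>"
    using a_small n(1) a C by linarith+
  have lower: "2 * (C + a) \<le> n" "2 * a / C + a + 2 * (C + a)\<^sup>2 / n \<le> \<omega> / 3"
    using a_small n_large n(1) a by auto
  show "rg_prob p n (\<lambda>G. card (component G i) = r)
      \<le> T r * exp (- real r) / (C * fact (r - 1)) * exp (- (delta C - C * \<epsilon> - \<omega>) * r)"
    using rg_prob_component_card_le[where p = p and n = n, OF p probs i r(1)]
      component_prob_upper_estimate[OF C upper(1) \<epsilon> a(1) upper(2,3) r, of "T r"]
    by simp
  show "1 / (C * (1 - \<epsilon>)) * (T r * exp (- real r) / fact (r - 1))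
      * exp (- (delta C - ln (1 - \<epsilon>) + \<omega>) * r) * exp (- 2 * \<epsilon> + 2 * \<omega> / 3)
      \<le> rg_prob p n (\<lambda>G. card (component G i) = r)"
    using rg_prob_component_card_ge[where p = p and n = n, OF p probs i r(1)]
      component_prob_lower_estimate[OF C \<epsilon> a(1,2) lower r, of "T r"]
    by simp
qed

theorem lemma1:
  fixes C \<epsilon> \<omega> :: real and \<alpha> :: "nat \<Rightarrow> real" and p :: "nat \<Rightarrow> nat set \<Rightarrow> real"
  assumes C_pos: "C > 0" and C_ne: "C \<noteq> 1"
    and \<alpha>_nonneg: "\<And>n. \<alpha> n \<ge> 0" and \<alpha>_lim: "\<alpha> \<longlonglongrightarrow> 0"
    and p_prob: "\<And>n e. e \<in> Kn_edges n \<Longrightarrow> 0 \<le> p n e \<and> p n e \<le> 1"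
    and p_low: "\<And>n e. n \<ge> 1 \<Longrightarrow> e \<in> Kn_edges n \<Longrightarrow> (C - \<alpha> n) / n \<le> p n e"
    and p_up: "\<And>n e. n \<ge> 1 \<Longrightarrow> e \<in> Kn_edges n \<Longrightarrow> p n e \<le> (C + \<alpha> n) / n"
    and \<epsilon>: "0 < \<epsilon>" "\<epsilon> < 1" and \<omega>: "\<omega> > 0"
    and \<delta>0: "delta C - C * \<epsilon> - \<omega> > 0"
  shows "\<exists>N>0. \<forall>n::nat. real n \<ge> N \<longrightarrow> (\<forall>i\<in>{1..n}. \<forall>r::nat. 1 \<le> r \<and> real r \<le> \<epsilon> * n \<longrightarrow>
     rg_prob p n (\<lambda>G. card (component G i) = r)
        \<le> T r * exp (- real r) / (C * fact (r - 1)) * exp (- (delta C - C * \<epsilon> - \<omega>) * r)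
   \<and> rg_prob p n (\<lambda>G. card (component G i) = r)
        \<ge> 1 / (C * (1 - \<epsilon>)) * (T r * exp (- real r) / fact (r - 1))
          * exp (- (delta C - ln (1 - \<epsilon>) + \<omega>) * r) * exp (- 2 * \<epsilon> + 2 * \<omega> / 3))"
proof -
  define a0 where "a0 = min (C / 2) (\<omega> * C / (6 * (2 + C)))"
  have "\<forall>\<^sub>F n in sequentially. \<alpha> n < a0"
    using C_pos \<omega> by (intro order_tendstoD(2)[OF \<alpha>_lim]) (simp add: a0_def)
  moreover have "\<forall>\<^sub>F n in sequentially. max (4 * C) (27 * C\<^sup>2 / \<omega>) \<le> real n"
    using filterlim_real_sequentially unfolding filterlim_at_top by blast
  ultimately obtain N0 where N0: "\<And>n. N0 \<le> n \<Longrightarrow> \<alpha> n < a0 \<and> max (4 * C) (27 * C\<^sup>2 / \<omega>) \<le> n"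
    unfolding eventually_sequentially by (metis le_max_iff_disj nle_le)
  show ?thesis
  proof (intro exI[of _ "real N0 + 1"] conjI allI impI ballI)
    fix n i r
    assume n: "real N0 + 1 \<le> real n" and i: "i \<in> {1..n}" and r: "1 \<le> r \<and> real r \<le> \<epsilon> * n"
    then have "1 \<le> n" "\<alpha> n < a0" "4 * C \<le> n" "27 * C\<^sup>2 / \<omega> \<le> n"
      using N0[of n] by auto
    then have p: "\<And>e. e \<in> Kn_edges n \<Longrightarrow> (C - \<alpha> n) / n \<le> p n e \<and> p n e \<le> (C + \<alpha> n) / n"
      and "\<alpha> n \<le> C / 2" "\<alpha> n * (2 + C) \<le> \<omega> * C / 6" "27 * C\<^sup>2 \<le> \<omega> * n"
      using p_low p_up C_pos \<omega> by (auto simp: a0_def field_simps)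
    then show "rg_prob p n (\<lambda>G. card (component G i) = r)
        \<le> T r * exp (- real r) / (C * fact (r - 1)) * exp (- (delta C - C * \<epsilon> - \<omega>) * r)"
      and "1 / (C * (1 - \<epsilon>)) * (T r * exp (- real r) / fact (r - 1))
        * exp (- (delta C - ln (1 - \<epsilon>) + \<omega>) * r) * exp (- 2 * \<epsilon> + 2 * \<omega> / 3)
        \<le> rg_prob p n (\<lambda>G. card (component G i) = r)"
      using component_size_prob_bounds[where p = p and n = n and a = "\<alpha> n", OF C_pos \<epsilon>(2) p]
        \<alpha>_nonneg \<open>4 * C \<le> n\<close> i r by auto
  qed simp
qed

end
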